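(* For any integer $c \ge 1$, let $s = 15(c+2)+1$ and $C = 4^4/(5e)^5$, where $e$ is Euler's number. There exists a randomized algorithm which, given any $n$ elements, outputs a $3$-max of the set with probability at least $1-n^{-c}$ using at most $(s-1)n + \frac{1}{2}\left(\frac{c+1}{C\ln 2}\right)^2 n^{2/3}\ln^4 n = O(n)$ comparisons. This holds even if the comparator chooses its answers on close pairs adversarially and adaptively (depending on the algorithm's previous queries).
   Context: Model of imprecise comparisons: there are $n$ elements, each with a fixed unknown real value (the values do not change during the execution); we identify an element with its value. Asked to compare $x_i$ and $x_j$, the comparator answers either "$x_i \ge x_j$" or "$x_j \ge x_i$". If $|x_i-x_j|>1$ the answer is correct; if $|x_i-x_j|\le 1$ the answer is arbitrary. An element $x$ is $k$-greater than $y$ if $x \ge y-k$; a $k$-max of a set is an element $k$-greater than all other elements of the set. *)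

theory Defs
  imports "HOL-Probability.Probability_Mass_Function"
begin

text \<open>Deterministic comparison algorithm on elements indexed 0..<n: a decision tree.
  Query i j g asks the comparator about the pair (i,j); the answer True means
  "x_i \<ge> x_j" and False means "x_j \<ge> x_i"; then continue with g answer.\<close>
datatype dtree = Leaf nat | Query nat nat "bool \<Rightarrow> dtree"

type_synonym history = "(nat \<times> nat \<times> bool) list"

text \<open>An adaptive adversarial comparator: its answer may depend on the whole
  history of previous queries (and answers) and on the current query.\<close>
type_synonym comparator = "history \<Rightarrow> nat \<Rightarrow> nat \<Rightarrow> bool"

definition valid_comparator :: "(nat \<Rightarrow> real) \<Rightarrow> comparator \<Rightarrow> bool" where
  "valid_comparator x cmp \<longleftrightarrow>
     (\<forall>h i j. \<bar>x i - x j\<bar> > 1 \<longrightarrow> (cmp h i j \<longleftrightarrow> x i \<ge> x j))"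

primrec run :: "comparator \<Rightarrow> history \<Rightarrow> dtree \<Rightarrow> nat \<times> history" where
  "run cmp h (Leaf k) = (k, h)"
| "run cmp h (Query i j g) = run cmp (h @ [(i, j, cmp h i j)]) (g (cmp h i j))"

primrec height :: "dtree \<Rightarrow> nat" where
  "height (Leaf k) = 0"
| "height (Query i j g) = Suc (max (height (g True)) (height (g False)))"

primrec wf_tree :: "nat \<Rightarrow> dtree \<Rightarrow> bool" where
  "wf_tree n (Leaf k) \<longleftrightarrow> k < n"
| "wf_tree n (Query i j g) \<longleftrightarrow> i < n \<and> j < n \<and> wf_tree n (g True) \<and> wf_tree n (g False)"

definition k_greater :: "real \<Rightarrow> real \<Rightarrow> real \<Rightarrow> bool" where
  "k_greater k a b \<longleftrightarrow> a \<ge> b - k"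

definition is_kmax :: "real \<Rightarrow> nat \<Rightarrow> (nat \<Rightarrow> real) \<Rightarrow> nat \<Rightarrow> bool" where
  "is_kmax k n x m \<longleftrightarrow> m < n \<and> (\<forall>j<n. j \<noteq> m \<longrightarrow> k_greater k (x m) (x j))"

end

theory Submission
  imports Defs "HOL-Analysis.Harmonic_Numbers"
begin

text \<open>A tournament runs \<open>K = \<lceil>log\<^sub>2 n\<rceil>\<close> rounds on the \<open>n\<close> elements: each round matches
  the field by a random cyclic shift, lets the winners of the matches advance, and sets \<open>m\<close>
  uniformly random members of the field aside as samples. Fix a maximum \<open>\<mu>\<close> and call an
  element good if it is at least \<open>x \<mu> - 1\<close>. If a fraction \<open>d\<close> of the field is good, \<open>\<mu>\<close>
  can only lose to a good element (probability \<open>\<le> d\<close>), and then all samples miss the good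
  elements with probability \<open>(1 - d)^m\<close>; as \<open>d (1 - d)^m \<le> 1/m\<close>, a tournament ends with
  no good element among its survivors and samples with probability at most \<open>K/m\<close>. With
  \<open>m = K \<lceil>n^(1/3)\<rceil>\<close>, \<open>3c\<close> independent tournaments all fail with probability at most
  \<open>n^-c\<close>. A round robin among the \<open>O(n^(1/3) log\<^sup>2 n)\<close> collected elements returns one that
  is within \<open>2\<close> of each of them, hence within \<open>3\<close> of \<open>\<mu>\<close>. Each tournament makes fewer
  than \<open>n\<close> comparisons since the field halves in every round.\<close>

lemma emeasure_bind_pmf_le:
  assumes "\<And>x. x \<in> set_pmf M \<Longrightarrow> emeasure (measure_pmf (N x)) X \<le> g x"
  shows "emeasure (measure_pmf (bind_pmf M N)) X \<le> (\<integral>\<^sup>+x. g x \<partial>measure_pmf M)"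
  unfolding emeasure_bind_pmf
  by (rule nn_integral_mono_AE) (use assms in \<open>auto simp: AE_measure_pmf_iff\<close>)

lemma measure_bind_pmf_le_add:
  assumes "\<And>x. x \<in> set_pmf M \<Longrightarrow> x \<notin> A \<Longrightarrow> measure_pmf.prob (N x) X \<le> b" "0 \<le> b"
  shows "measure_pmf.prob (bind_pmf M N) X \<le> measure_pmf.prob M A + b"
proof -
  have "emeasure (measure_pmf (bind_pmf M N)) X \<le> (\<integral>\<^sup>+x. (indicator A x + ennreal b) \<partial>measure_pmf M)"
  proof (rule emeasure_bind_pmf_le)
    fix x assume x: "x \<in> set_pmf M"
    show "emeasure (measure_pmf (N x)) X \<le> indicator A x + ennreal b"
    proof (cases "x \<in> A")
      case True
      then show ?thesis using measure_pmf.emeasure_le_1[of "N x" X]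
        by (simp add: add_increasing2)
    next
      case False
      then show ?thesis using assms(1)[OF x False]
        by (simp add: measure_pmf.emeasure_eq_measure ennreal_leI)
    qed
  qed
  also have "\<dots> = emeasure (measure_pmf M) A + ennreal b"
    by (subst nn_integral_add) (auto simp: measure_pmf.prob_space)
  finally show ?thesis using assms(2)
    by (simp add: measure_pmf.emeasure_eq_measure ennreal_plus[symmetric] del: ennreal_plus)
qed

lemma measure_bind_pmf_le_mult:
  assumes "\<And>x. x \<in> set_pmf M \<Longrightarrow> x \<in> A \<Longrightarrow> measure_pmf.prob (N x) X \<le> b"
    and "\<And>x. x \<in> set_pmf M \<Longrightarrow> x \<notin> A \<Longrightarrow> measure_pmf.prob (N x) X = 0" and "0 \<le> b"
  shows "measure_pmf.prob (bind_pmf M N) X \<le> measure_pmf.prob M A * b"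
proof -
  have "emeasure (measure_pmf (bind_pmf M N)) X \<le> (\<integral>\<^sup>+x. ennreal b * indicator A x \<partial>measure_pmf M)"
  proof (rule emeasure_bind_pmf_le)
    fix x assume "x \<in> set_pmf M"
    then show "emeasure (measure_pmf (N x)) X \<le> ennreal b * indicator A x"
      using assms by (cases "x \<in> A") (auto simp: measure_pmf.emeasure_eq_measure ennreal_leI)
  qed
  also have "\<dots> = ennreal b * emeasure (measure_pmf M) A"
    by (rule nn_integral_cmult_indicator) simp
  finally show ?thesis using assms(3)
    by (simp add: measure_pmf.emeasure_eq_measure ennreal_mult''[symmetric] ennreal_le_iff mult.commute)
qed

datatype 'a cprog =
    Return 'a
  | Compare nat nat "bool \<Rightarrow> 'a cprog"
  | Sample nat "nat \<Rightarrow> 'a cprog"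

primrec cbind :: "'a cprog \<Rightarrow> ('a \<Rightarrow> 'b cprog) \<Rightarrow> 'b cprog" where
  "cbind (Return a) f = f a"
| "cbind (Compare i j g) f = Compare i j (\<lambda>b. cbind (g b) f)"
| "cbind (Sample N g) f = Sample N (\<lambda>u. cbind (g u) f)"

text \<open>\<open>Sample N\<close> draws uniformly from \<open>{..<N}\<close>; \<open>Sample 0\<close> is read as \<open>Sample 1\<close> so that
  every program denotes a proper distribution.\<close>

definition uniform :: "nat \<Rightarrow> nat pmf" where
  "uniform N = pmf_of_set {..<max 1 N}"

lemma set_pmf_uniform [simp]: "set_pmf (uniform N) = {..<max 1 N}"
  unfolding uniform_def by (rule set_pmf_of_set) (auto simp: set_eq_iff intro: exI[of _ 0])

lemma measure_uniform:
  assumes "0 < N"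
  shows "measure_pmf.prob (uniform N) A = card ({..<N} \<inter> A) / N"
  unfolding uniform_def using assms by (subst measure_pmf_of_set) auto

primrec exec :: "comparator \<Rightarrow> 'a cprog \<Rightarrow> history \<Rightarrow> ('a \<times> history) pmf" where
  "exec cmp (Return a) h = return_pmf (a, h)"
| "exec cmp (Compare i j g) h = exec cmp (g (cmp h i j)) (h @ [(i, j, cmp h i j)])"
| "exec cmp (Sample N g) h = bind_pmf (uniform N) (\<lambda>u. exec cmp (g u) h)"

lemma exec_cbind:
  "exec cmp (cbind p f) h = bind_pmf (exec cmp p h) (\<lambda>(a, h'). exec cmp (f a) h')"
  by (induction p arbitrary: h) (auto simp: bind_return_pmf bind_assoc_pmf)

text \<open>Drawing every random choice in advance turns a program into a distribution over
  deterministic decision trees. Since the comparator is a fixed function of the history,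
  running such a random tree against it is the same as executing the program.\<close>

primrec dtree_pmf :: "nat cprog \<Rightarrow> dtree pmf" where
  "dtree_pmf (Return k) = return_pmf (Leaf k)"
| "dtree_pmf (Compare i j g) =
     bind_pmf (dtree_pmf (g True)) (\<lambda>t. bind_pmf (dtree_pmf (g False))
       (\<lambda>f. return_pmf (Query i j (\<lambda>b. if b then t else f))))"
| "dtree_pmf (Sample N g) = bind_pmf (uniform N) (\<lambda>u. dtree_pmf (g u))"

lemma map_run_dtree_pmf: "map_pmf (run cmp h) (dtree_pmf p) = exec cmp p h"
proof (induction p arbitrary: h)
  case (Compare i j g)
  then show ?case
    by (cases "cmp h i j")
       (simp_all add: map_bind_pmf map_pmf_comp o_def map_pmf_const bind_return_pmf'
         bind_pmf_const map_pmf_def[symmetric])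
qed (simp_all add: map_bind_pmf)

primrec within_budget :: "nat \<Rightarrow> ('a \<Rightarrow> nat \<Rightarrow> bool) \<Rightarrow> 'a cprog \<Rightarrow> nat \<Rightarrow> bool" where
  "within_budget n Q (Return a) B = Q a B"
| "within_budget n Q (Compare i j g) B =
     (0 < B \<and> i < n \<and> j < n \<and> (\<forall>b. within_budget n Q (g b) (B - 1)))"
| "within_budget n Q (Sample N g) B = (\<forall>u < max 1 N. within_budget n Q (g u) B)"

lemma within_budget_mono:
  "within_budget n Q p B \<Longrightarrow> (\<And>a B'. Q a B' \<Longrightarrow> Q' a B') \<Longrightarrow> within_budget n Q' p B"
  by (induction p arbitrary: B) auto

lemma within_budget_cbind:
  "within_budget n (\<lambda>a B'. within_budget n Q (f a) B') p B \<Longrightarrow> within_budget n Q (cbind p f) B"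
  by (induction p arbitrary: B) auto

lemma within_budget_exec:
  assumes "within_budget n Q p B" "(a, h') \<in> set_pmf (exec cmp p h)"
  shows "\<exists>B'. Q a B'"
  using assms
proof (induction p arbitrary: B h)
  case (Compare i j g)
  then show ?case using Compare.IH[of "g (cmp h i j)" "B - 1"] by auto
next
  case (Sample N g)
  then obtain u where "u < max 1 N" "(a, h') \<in> set_pmf (exec cmp (g u) h)" by auto
  with Sample.IH[of "g u" B] Sample.prems show ?case by auto
qed auto

lemma within_budget_dtree_pmf:
  assumes "within_budget n (\<lambda>k B'. k < n) p B" "T \<in> set_pmf (dtree_pmf p)"
  shows "wf_tree n T \<and> height T \<le> B"
  using assms
proof (induction p arbitrary: B T)
  case (Compare i j g)
  then obtain t f where "t \<in> set_pmf (dtree_pmf (g True))" "f \<in> set_pmf (dtree_pmf (g False))"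
    and "T = Query i j (\<lambda>b. if b then t else f)" by auto
  with Compare.IH[of "g True" "B - 1" t] Compare.IH[of "g False" "B - 1" f] Compare.prems
  show ?case by auto
next
  case (Sample N g)
  then obtain u where "u < max 1 N" "T \<in> set_pmf (dtree_pmf (g u))" by auto
  with Sample.IH[of "g u" B T] Sample.prems show ?case by auto
qed auto

fun compare_all :: "(nat \<times> nat) list \<Rightarrow> (nat \<times> nat \<times> bool) list cprog" where
  "compare_all [] = Return []"
| "compare_all ((i, j) # ps) =
     Compare i j (\<lambda>b. cbind (compare_all ps) (\<lambda>rs. Return ((i, j, b) # rs)))"

definition pairs_of :: "(nat \<times> nat \<times> bool) list \<Rightarrow> (nat \<times> nat) list" where
  "pairs_of rs = map (\<lambda>(i, j, _). (i, j)) rs"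

definition consistent :: "(nat \<Rightarrow> real) \<Rightarrow> (nat \<times> nat \<times> bool) list \<Rightarrow> bool" where
  "consistent x rs \<longleftrightarrow> (\<forall>(i, j, b) \<in> set rs. \<bar>x i - x j\<bar> > 1 \<longrightarrow> (b \<longleftrightarrow> x i \<ge> x j))"

lemma exec_compare_all:
  assumes "valid_comparator x cmp" "(rs, h') \<in> set_pmf (exec cmp (compare_all ps) h)"
  shows "pairs_of rs = ps \<and> consistent x rs"
  using assms(2)
proof (induction ps arbitrary: h rs h' rule: compare_all.induct)
  case (2 i j ps)
  then obtain rs' where "(rs', h') \<in> set_pmf (exec cmp (compare_all ps) (h @ [(i, j, cmp h i j)]))"
    and "rs = (i, j, cmp h i j) # rs'"
    by (auto simp: exec_cbind split: prod.splits)
  with "2.IH" assms(1) show ?case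
    by (fastforce simp: pairs_of_def consistent_def valid_comparator_def)
qed (simp add: pairs_of_def consistent_def)

lemma within_budget_compare_all:
  assumes "\<forall>(i, j) \<in> set ps. i < n \<and> j < n" "length ps \<le> B"
  shows "within_budget n (\<lambda>rs B'. B' = B - length ps \<and> pairs_of rs = ps) (compare_all ps) B"
  using assms
proof (induction ps arbitrary: B rule: compare_all.induct)
  case (2 i j ps)
  have "within_budget n (\<lambda>rs B'. B' = B - 1 - length ps \<and> pairs_of rs = ps) (compare_all ps) (B - 1)"
    using "2.IH"[of "B - 1"] "2.prems" by auto
  then have "within_budget n (\<lambda>rs. within_budget n
      (\<lambda>rs B'. B' = B - length ((i, j) # ps) \<and> pairs_of rs = (i, j) # ps) (Return ((i, j, b) # rs)))
      (compare_all ps) (B - 1)" for b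
    by (rule within_budget_mono) (simp add: pairs_of_def)
  then show ?case using "2.prems" by (auto intro!: within_budget_cbind)
qed (simp add: pairs_of_def)

primrec all_pairs :: "nat list \<Rightarrow> (nat \<times> nat) list" where
  "all_pairs [] = []"
| "all_pairs (a # as) = map (Pair a) as @ all_pairs as"

lemma length_all_pairs: "2 * length (all_pairs F) = length F * (length F - 1)"
proof (induction F)
  case (Cons a F)
  then show ?case by (cases F) (auto simp: algebra_simps)
qed simp

lemma all_pairs_complete:
  "a \<in> set F \<Longrightarrow> b \<in> set F \<Longrightarrow> a \<noteq> b \<Longrightarrow> (a, b) \<in> set (all_pairs F) \<or> (b, a) \<in> set (all_pairs F)"
  by (induction F) auto

lemma set_all_pairs: "(a, b) \<in> set (all_pairs F) \<Longrightarrow> a \<in> set F \<and> b \<in> set F"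
  by (induction F) auto

definition beats :: "(nat \<times> nat \<times> bool) list \<Rightarrow> nat \<Rightarrow> nat \<Rightarrow> bool" where
  "beats rs a b \<longleftrightarrow> (a, b, True) \<in> set rs \<or> (b, a, False) \<in> set rs"

definition wins :: "nat list \<Rightarrow> (nat \<times> nat \<times> bool) list \<Rightarrow> nat \<Rightarrow> nat" where
  "wins F rs a = card {z \<in> set F. z \<noteq> a \<and> beats rs a z}"

text \<open>The output \<open>0\<close> for an empty field only keeps the output index in range.\<close>

definition champion :: "nat list \<Rightarrow> (nat \<times> nat \<times> bool) list \<Rightarrow> nat" where
  "champion F rs = (if F = [] then 0 else arg_max (wins F rs) (\<lambda>a. a \<in> set F))"

lemma champion_has_most_wins:
  assumes "F \<noteq> []"
  shows "champion F rs \<in> set F \<and> (\<forall>a\<in>set F. wins F rs a \<le> wins F rs (champion F rs))"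
proof -
  have "wins F rs a < Suc (length F)" for a
    using card_mono[of "set F" "{z \<in> set F. z \<noteq> a \<and> beats rs a z}"] card_length[of F]
    by (simp add: wins_def)
  moreover have "hd F \<in> set F" using assms by simp
  ultimately show ?thesis
    using arg_max_nat_lemma[of "\<lambda>a. a \<in> set F" "hd F" "wins F rs" "Suc (length F)"] assms
    by (simp add: champion_def)
qed

lemma beats_sound:
  "consistent x rs \<Longrightarrow> beats rs a b \<Longrightarrow> \<not> x b > x a + 1"
  unfolding consistent_def beats_def by force

lemma beats_complete:
  assumes "consistent x rs" "pairs_of rs = all_pairs F" "a \<in> set F" "b \<in> set F" "x a > x b + 1"
  shows "beats rs a b"
proof -
  have "a \<noteq> b" using assms(5) by auto
  then have "(a, b) \<in> set (pairs_of rs) \<or> (b, a) \<in> set (pairs_of rs)"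
    using all_pairs_complete[OF assms(3,4)] assms(2) by simp
  then obtain b' where "(a, b, b') \<in> set rs \<or> (b, a, b') \<in> set rs"
    unfolding pairs_of_def by force
  then show ?thesis using assms(1,5) unfolding consistent_def beats_def by force
qed

text \<open>If \<open>y\<close> exceeded the champion \<open>w\<close> by more than \<open>2\<close>, then \<open>y\<close> would beat \<open>w\<close> and every
  element \<open>w\<close> beats (those are below \<open>x w + 1\<close>), so \<open>y\<close> would have strictly more wins.\<close>

lemma champion_2_max:
  assumes "consistent x rs" "pairs_of rs = all_pairs F" "y \<in> set F"
  shows "x y \<le> x (champion F rs) + 2"
proof (rule ccontr)
  define w where "w = champion F rs"
  assume "\<not> x y \<le> x w + 2"
  then have gt: "x y > x w + 2" by simp
  have "F \<noteq> []" using assms(3) by auto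
  then have w: "w \<in> set F" and most: "wins F rs y \<le> wins F rs w"
    using champion_has_most_wins[of F rs] assms(3) unfolding w_def by auto
  have "{z \<in> set F. z \<noteq> w \<and> beats rs w z} \<subseteq> {z \<in> set F. z \<noteq> y \<and> beats rs y z}"
  proof
    fix z assume z: "z \<in> {z \<in> set F. z \<noteq> w \<and> beats rs w z}"
    then have "x y > x z + 1" using beats_sound[OF assms(1)] gt by force
    with z show "z \<in> {z \<in> set F. z \<noteq> y \<and> beats rs y z}"
      using beats_complete[OF assms(1,2,3)] by auto
  qed
  moreover have "w \<in> {z \<in> set F. z \<noteq> y \<and> beats rs y z}"
    using beats_complete[OF assms(1,2,3) w] w gt by auto
  ultimately have "{z \<in> set F. z \<noteq> w \<and> beats rs w z} \<subset> {z \<in> set F. z \<noteq> y \<and> beats rs y z}"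
    by blast
  then have "wins F rs w < wins F rs y" unfolding wins_def by (intro psubset_card_mono) auto
  with most show False by simp
qed

definition round_robin :: "nat list \<Rightarrow> nat cprog" where
  "round_robin F = cbind (compare_all (all_pairs F)) (\<lambda>rs. Return (champion F rs))"

lemma within_budget_round_robin:
  assumes "set F \<subseteq> {..<n}" "0 < n" "length F * (length F - 1) div 2 \<le> B"
  shows "within_budget n (\<lambda>k B'. k < n) (round_robin F) B"
  unfolding round_robin_def
proof (rule within_budget_cbind, rule within_budget_mono)
  show "within_budget n (\<lambda>rs B'. B' = B - length (all_pairs F) \<and> pairs_of rs = all_pairs F)
      (compare_all (all_pairs F)) B"
    using length_all_pairs[of F] assms(1,3) set_all_pairs[of _ _ F]
    by (intro within_budget_compare_all) auto
  show "within_budget n (\<lambda>k B'. k < n) (Return (champion F rs)) B'" for rs B'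
    using champion_has_most_wins[of F rs] assms(1,2) by (auto simp: champion_def)
qed

lemma exec_round_robin:
  assumes "valid_comparator x cmp" "(w, h') \<in> set_pmf (exec cmp (round_robin F) h)" "F \<noteq> []"
  shows "w \<in> set F \<and> (\<forall>y\<in>set F. x y \<le> x w + 2)"
proof -
  from assms(2) obtain rs h1 where rs: "(rs, h1) \<in> set_pmf (exec cmp (compare_all (all_pairs F)) h)"
    and w: "w = champion F rs" by (auto simp: round_robin_def exec_cbind)
  from exec_compare_all[OF assms(1) rs] show ?thesis
    using champion_2_max champion_has_most_wins assms(3) w by blast
qed

text \<open>In a round with shift \<open>j\<close>, position \<open>i\<close> of a field of size \<open>l\<close> is matched with the
  position \<open>p\<close> such that \<open>i + p \<equiv> j (mod l)\<close>.\<close>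

definition partner :: "nat \<Rightarrow> nat \<Rightarrow> nat \<Rightarrow> nat" where
  "partner l j i = (j + l - i) mod l"

lemma partner_less: "0 < l \<Longrightarrow> partner l j i < l"
  by (simp add: partner_def)

lemma partner_add_mod: "i < l \<Longrightarrow> j < l \<Longrightarrow> (partner l j i + i) mod l = j"
  unfolding partner_def by (simp add: mod_add_left_eq)

lemma partner_eq_iff:
  assumes "i < l" "j < l" "k < l"
  shows "partner l j i = k \<longleftrightarrow> (k + i) mod l = j"
proof
  assume j: "(k + i) mod l = j"
  have "(j + l - i) mod l = k"
  proof (cases "k + i < l")
    case True
    with j have "j + l - i = k + l" by simp
    with assms(3) show ?thesis by simp
  next
    case False
    with j assms(1,3) have "j = k + i - l" by (simp add: le_mod_geq)
    with False assms(3) show ?thesis by simp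
  qed
  then show "partner l j i = k" by (simp add: partner_def)
qed (use partner_add_mod[OF assms(1,2)] in simp)

lemma partner_partner: "i < l \<Longrightarrow> j < l \<Longrightarrow> partner l j (partner l j i) = i"
  using partner_eq_iff[of "partner l j i" l j i] partner_add_mod[of i l j] partner_less[of l j i]
  by (simp add: add.commute)

lemma partner_inj:
  assumes "i < l" "j < l" "j' < l" "partner l j i = partner l j' i"
  shows "j = j'"
  by (metis assms partner_add_mod)

lemma partner_fixed_points_apart:
  assumes "a < b" "b < l" "j < l" "partner l j a = a" "partner l j b = b"
  shows "2 * (b - a) = l"
proof -
  have "(a + a) mod l = (b + b) mod l"
    using assms partner_eq_iff[of a l j a] partner_eq_iff[of b l j b] by simp
  then have "l dvd (b + b) - (a + a)"
    using assms(1) mod_eq_dvd_iff_nat[of "a + a" "b + b" l] by simp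
  moreover have "(b + b) - (a + a) = 2 * (b - a)" by simp
  ultimately obtain k where k: "2 * (b - a) = l * k" by (auto elim: dvdE)
  have "0 < l * k" "l * k < l * 2" using assms(1,2) k[symmetric] by auto
  then have "k = 1" by simp
  with k show ?thesis by simp
qed

lemma card_partner_fixed_points:
  assumes "j < l"
  shows "card {i. i < l \<and> partner l j i = i} \<le> 2"
proof -
  define S where "S = {i. i < l \<and> partner l j i = i}"
  have "card S \<le> 2"
  proof (cases "S = {}")
    case False
    define a where "a = Min S"
    have "finite S" unfolding S_def by simp
    with False have a: "a \<in> S" "\<And>i. i \<in> S \<Longrightarrow> a \<le> i"
      unfolding a_def by (auto intro: Min_in Min_le)
    have "S \<subseteq> {a, a + l div 2}"
    proof
      fix i assume i: "i \<in> S"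
      show "i \<in> {a, a + l div 2}"
      proof (cases "i = a")
        case False
        with a i have "2 * (i - a) = l"
          using assms by (intro partner_fixed_points_apart) (auto simp: S_def le_less)
        with a(2)[OF i] show ?thesis by auto
      qed simp
    qed
    then have "card S \<le> card {a, a + l div 2}" by (rule card_mono[rotated]) simp
    also have "\<dots> \<le> 2" by (simp add: card_insert_if)
    finally show ?thesis .
  qed simp
  then show ?thesis unfolding S_def .
qed

lemma length_filter_upt: "length (filter P [0..<l]) = card {i. i < l \<and> P i}"
proof -
  have "{i. i < length [0..<l] \<and> P ([0..<l] ! i)} = {i. i < l \<and> P i}" by auto
  then show ?thesis by (simp add: length_filter_conv_card)
qed

definition matched :: "nat \<Rightarrow> nat \<Rightarrow> nat list" where
  "matched l j = filter (\<lambda>i. i < partner l j i) [0..<l]"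

definition unmatched :: "nat \<Rightarrow> nat \<Rightarrow> nat list" where
  "unmatched l j = filter (\<lambda>i. partner l j i = i) [0..<l]"

lemma length_unmatched: "j < l \<Longrightarrow> length (unmatched l j) \<le> 2"
  using card_partner_fixed_points by (simp add: unmatched_def length_filter_upt)

lemma length_unmatched_matched:
  assumes "j < l"
  shows "length (unmatched l j) + 2 * length (matched l j) = l"
proof -
  let ?p = "partner l j"
  define Fx where "Fx = {i. i < l \<and> ?p i = i}"
  define Lt where "Lt = {i. i < l \<and> i < ?p i}"
  define Gt where "Gt = {i. i < l \<and> ?p i < i}"
  have "bij_betw ?p Lt Gt"
    by (rule bij_betw_byWitness[where f' = ?p])
       (use partner_partner[OF _ assms] partner_less[of l j] assms in \<open>auto simp: Lt_def Gt_def\<close>)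
  then have Gt: "card Gt = card Lt" by (simp add: bij_betw_same_card)
  have "{..<l} = Fx \<union> (Lt \<union> Gt)" by (auto simp: Fx_def Lt_def Gt_def)
  then have "l = card (Fx \<union> (Lt \<union> Gt))" by (metis card_lessThan)
  moreover have "finite Fx" "finite Lt" "finite Gt" "Lt \<inter> Gt = {}" "Fx \<inter> (Lt \<union> Gt) = {}"
    by (auto simp: Fx_def Lt_def Gt_def)
  ultimately have "l = card Fx + (card Lt + card Gt)" by (simp add: card_Un_disjoint)
  moreover have "length (unmatched l j) = card Fx" "length (matched l j) = card Lt"
    unfolding unmatched_def matched_def Fx_def Lt_def by (simp_all only: length_filter_upt)
  ultimately show ?thesis using Gt by linarith
qed

primrec samples :: "nat \<Rightarrow> nat \<Rightarrow> nat list cprog" where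
  "samples N 0 = Return []"
| "samples N (Suc m) = Sample N (\<lambda>u. cbind (samples N m) (\<lambda>us. Return (u # us)))"

lemma exec_samples: "exec cmp (samples N m) h = map_pmf (\<lambda>us. (us, h)) (replicate_pmf m (uniform N))"
  by (induction m) (simp_all add: exec_cbind map_pmf_def bind_assoc_pmf bind_return_pmf)

lemma within_budget_samples:
  "within_budget n (\<lambda>us B'. B' = B \<and> length us = m \<and> set us \<subseteq> {..<max 1 N}) (samples N m) B"
proof (induction m)
  case (Suc m)
  then show ?case
    by (auto intro!: within_budget_cbind elim!: within_budget_mono)
qed simp

lemma measure_replicate_pmf_all_le:
  "measure_pmf.prob (replicate_pmf m p) {xs. \<forall>x\<in>set xs. P x} \<le> measure_pmf.prob p {x. P x} ^ m"
proof (induction m)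
  case (Suc m)
  have "replicate_pmf (Suc m) p = bind_pmf p (\<lambda>x. map_pmf ((#) x) (replicate_pmf m p))"
    by (simp add: map_pmf_def)
  also have "measure_pmf.prob \<dots> {xs. \<forall>x\<in>set xs. P x}
      \<le> measure_pmf.prob p {x. P x} * measure_pmf.prob p {x. P x} ^ m"
    by (rule measure_bind_pmf_le_mult) (use Suc in \<open>auto simp: measure_pmf_zero_iff\<close>)
  finally show ?case by simp
qed simp

definition winner :: "nat \<times> nat \<times> bool \<Rightarrow> nat" where
  "winner r = (case r of (a, b, ans) \<Rightarrow> if ans then a else b)"

definition round_pairs :: "nat list \<Rightarrow> nat \<Rightarrow> (nat \<times> nat) list" where
  "round_pairs L j = map (\<lambda>i. (L ! i, L ! partner (length L) j i)) (matched (length L) j)"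

definition byes :: "nat list \<Rightarrow> nat \<Rightarrow> nat list" where
  "byes L j = map ((!) L) (unmatched (length L) j)"

definition play :: "nat list \<Rightarrow> nat \<Rightarrow> nat list \<Rightarrow> (nat list \<times> nat list) cprog" where
  "play L j S = cbind (compare_all (round_pairs L j)) (\<lambda>rs. Return (byes L j @ map winner rs, S))"

definition round :: "nat \<Rightarrow> nat list \<Rightarrow> (nat list \<times> nat list) cprog" where
  "round m L = Sample (length L) (\<lambda>j.
     cbind (samples (length L) m) (\<lambda>idx. play L j (map ((!) L) idx)))"

lemma set_round_pairs:
  assumes "j < length L" "(a, b) \<in> set (round_pairs L j)"
  shows "a \<in> set L \<and> b \<in> set L"
proof -
  have "partner (length L) j i < length L" for i using assms(1) by (intro partner_less) linarith
  with assms show ?thesis by (auto simp: round_pairs_def matched_def)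
qed

lemma set_byes: "set (byes L j) \<subseteq> set L"
  by (auto simp: byes_def unmatched_def)

lemma within_budget_play:
  assumes "j < length L" "set L \<subseteq> {..<n}" "length L \<le> B"
  shows "within_budget n (\<lambda>(L', S') B'. B' + length L = B + length L' \<and> L' \<noteq> [] \<and>
      set L' \<subseteq> set L \<and> S' = S \<and> 2 * length L' \<le> length L + 2) (play L j S) B"
  unfolding play_def
proof (rule within_budget_cbind, rule within_budget_mono)
  let ?l = "length L"
  have count: "length (unmatched ?l j) + 2 * length (matched ?l j) = ?l"
    using length_unmatched_matched[OF assms(1)] .
  have "length (round_pairs L j) \<le> B" "\<forall>(a, b) \<in> set (round_pairs L j). a < n \<and> b < n"
    using count assms set_round_pairs[OF assms(1)] by (auto simp: round_pairs_def)
  then show "within_budget n (\<lambda>rs B'. B' = B - length (round_pairs L j) \<and> pairs_of rs = round_pairs L j)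
      (compare_all (round_pairs L j)) B"
    by (intro within_budget_compare_all)
  fix rs B'
  assume rs: "B' = B - length (round_pairs L j) \<and> pairs_of rs = round_pairs L j"
  then have len: "length rs = length (matched ?l j)"
    by (metis length_map pairs_of_def round_pairs_def)
  have "winner r \<in> set L" if "r \<in> set rs" for r
  proof -
    obtain a b ans where r: "r = (a, b, ans)" by (cases r)
    with that have "(a, b) \<in> set (pairs_of rs)" unfolding pairs_of_def by force
    with rs have "(a, b) \<in> set (round_pairs L j)" by simp
    then show ?thesis using set_round_pairs[OF assms(1)] by (simp add: r winner_def)
  qed
  then show "within_budget n (\<lambda>(L', S') B'. B' + length L = B + length L' \<and> L' \<noteq> [] \<and>
      set L' \<subseteq> set L \<and> S' = S \<and> 2 * length L' \<le> length L + 2)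
      (Return (byes L j @ map winner rs, S)) B'"
    using rs len count length_unmatched[OF assms(1)] set_byes[of L j] assms(1,3)
    by (auto simp: byes_def round_pairs_def)
qed

lemma within_budget_round:
  assumes "L \<noteq> []" "set L \<subseteq> {..<n}" "length L \<le> B"
  shows "within_budget n (\<lambda>(L', S) B'. B' + length L = B + length L' \<and> L' \<noteq> [] \<and>
      set L' \<subseteq> set L \<and> set S \<subseteq> set L \<and> length S = m \<and> 2 * length L' \<le> length L + 2)
    (round m L) B"
  unfolding round_def within_budget.simps
proof (intro allI impI within_budget_cbind)
  fix j assume "j < max 1 (length L)"
  moreover have "0 < length L" using assms(1) by simp
  ultimately have j: "j < length L" by linarith
  show "within_budget n (\<lambda>idx. within_budget n (\<lambda>(L', S) B'. B' + length L = B + length L' \<and>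
      L' \<noteq> [] \<and> set L' \<subseteq> set L \<and> set S \<subseteq> set L \<and> length S = m \<and>
      2 * length L' \<le> length L + 2) (play L j (map ((!) L) idx))) (samples (length L) m) B"
  proof (rule within_budget_mono[OF within_budget_samples], clarify)
    fix idx assume "set idx \<subseteq> {..<max 1 (length L)}"
    moreover have "max 1 (length L) = length L" using assms(1) by (cases L) auto
    ultimately have S: "set (map ((!) L) idx) \<subseteq> set L" by (auto intro!: nth_mem)
    show "within_budget n (\<lambda>(L', S) B'. B' + length L = B + length L' \<and>
      L' \<noteq> [] \<and> set L' \<subseteq> set L \<and> set S \<subseteq> set L \<and> length S = length idx \<and>
      2 * length L' \<le> length L + 2) (play L j (map ((!) L) idx)) B"
      by (rule within_budget_mono[OF within_budget_play[OF j assms(2,3)]]) (use S in auto)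
  qed
qed

lemma exec_round:
  "exec cmp (round m L) h = bind_pmf (uniform (length L)) (\<lambda>j.
     bind_pmf (replicate_pmf m (uniform (length L))) (\<lambda>idx. exec cmp (play L j (map ((!) L) idx)) h))"
  by (simp add: round_def exec_cbind exec_samples bind_map_pmf)

lemma exec_play_survives:
  assumes "valid_comparator x cmp" "((L', S'), h') \<in> set_pmf (exec cmp (play L j S) h)"
    and "j < length L" "p < length L"
    and "partner (length L) j p = p \<or> x (L ! partner (length L) j p) < x (L ! p) - 1"
  shows "L ! p \<in> set L'"
proof -
  define q where "q = partner (length L) j p"
  obtain rs h1 where rs: "(rs, h1) \<in> set_pmf (exec cmp (compare_all (round_pairs L j)) h)"
    and L': "L' = byes L j @ map winner rs"
    using assms(2) by (auto simp: play_def exec_cbind)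
  from exec_compare_all[OF assms(1) rs]
  have pairs: "pairs_of rs = round_pairs L j" and cons: "consistent x rs" by auto
  have "q < length L" using assms(3) partner_less[of "length L" j p] unfolding q_def by linarith
  consider "q = p" | "p < q" "x (L ! q) < x (L ! p) - 1" | "q < p" "x (L ! q) < x (L ! p) - 1"
    using assms(5) unfolding q_def by fastforce
  then show ?thesis
  proof cases
    case 1
    then have "p \<in> set (unmatched (length L) j)"
      using assms(4) by (simp add: unmatched_def q_def)
    then show ?thesis by (force simp: L' byes_def)
  next
    case 2
    then have "(L ! p, L ! q) \<in> set (pairs_of rs)"
      using assms(4) by (force simp: pairs round_pairs_def matched_def q_def)
    then obtain b where "(L ! p, L ! q, b) \<in> set rs" unfolding pairs_of_def by force
    with cons 2 have "(L ! p, L ! q, True) \<in> set rs" unfolding consistent_def by fastforce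
    then show ?thesis unfolding L' winner_def by force
  next
    case 3
    have "partner (length L) j q = p" using partner_partner[OF assms(4,3)] by (simp add: q_def)
    with 3 \<open>q < length L\<close> have "(L ! q, L ! p) \<in> set (pairs_of rs)"
      by (force simp: pairs round_pairs_def matched_def)
    then obtain b where "(L ! q, L ! p, b) \<in> set rs" unfolding pairs_of_def by force
    with cons 3 have "(L ! q, L ! p, False) \<in> set rs" unfolding consistent_def by fastforce
    then show ?thesis unfolding L' winner_def by force
  qed
qed

lemma measure_round_loses_le:
  assumes "valid_comparator x cmp" "p < length L"
  defines "l \<equiv> length L" and "mu \<equiv> L ! p"
  shows "measure_pmf.prob (exec cmp (round m L) h)
      {((L', S), h'). mu \<notin> set L' \<and> (\<forall>s\<in>set S. x s < x mu - 1)}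
    \<le> measure_pmf.prob (uniform l) {j. partner l j p \<noteq> p \<and> x mu - 1 \<le> x (L ! partner l j p)}
      * measure_pmf.prob (replicate_pmf m (uniform l)) {us. \<forall>u\<in>set us. x (L ! u) < x mu - 1}"
  unfolding exec_round l_def[symmetric]
proof (rule measure_bind_pmf_le_mult)
  fix j assume j: "j \<in> set_pmf (uniform l)"
  with assms(2) have "j < l" by (simp add: l_def)
  show "measure_pmf.prob (bind_pmf (replicate_pmf m (uniform l))
      (\<lambda>idx. exec cmp (play L j (map ((!) L) idx)) h))
      {((L', S), h'). mu \<notin> set L' \<and> (\<forall>s\<in>set S. x s < x mu - 1)}
    \<le> measure_pmf.prob (replicate_pmf m (uniform l)) {us. \<forall>u\<in>set us. x (L ! u) < x mu - 1}"
    by (rule order_trans[OF measure_bind_pmf_le_mult[where b = 1 and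
          A = "{us. \<forall>u\<in>set us. x (L ! u) < x mu - 1}"]])
       (auto simp: play_def exec_cbind measure_pmf_zero_iff)
  assume "j \<notin> {j. partner l j p \<noteq> p \<and> x mu - 1 \<le> x (L ! partner l j p)}"
  then have "partner l j p = p \<or> x (L ! partner l j p) < x mu - 1" by auto
  then show "measure_pmf.prob (bind_pmf (replicate_pmf m (uniform l))
      (\<lambda>idx. exec cmp (play L j (map ((!) L) idx)) h))
      {((L', S), h'). mu \<notin> set L' \<and> (\<forall>s\<in>set S. x s < x mu - 1)} = 0"
    using exec_play_survives[OF assms(1) _ \<open>j < l\<close>[unfolded l_def] assms(2)]
    by (auto simp: measure_pmf_zero_iff l_def mu_def)
qed simp

lemma card_shifts_partner_in:
  assumes "p < l" "p \<in> Q"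
  shows "card {j. j < l \<and> partner l j p \<noteq> p \<and> partner l j p \<in> Q} \<le> card ({..<l} \<inter> Q) - 1"
proof -
  let ?J = "{j. j < l \<and> partner l j p \<noteq> p \<and> partner l j p \<in> Q}"
  have "inj_on (\<lambda>j. partner l j p) ?J"
    using partner_inj[OF assms(1)] by (auto intro: inj_onI)
  moreover have "(\<lambda>j. partner l j p) ` ?J \<subseteq> ({..<l} \<inter> Q) - {p}"
    using partner_less[of l] assms(1) by auto
  ultimately have "card ?J \<le> card (({..<l} \<inter> Q) - {p})"
    by (intro card_inj_on_le) auto
  with assms show ?thesis by simp
qed

lemma mult_one_minus_power_le:
  fixes d :: real
  assumes "0 \<le> d" "d \<le> 1" "1 \<le> m"
  shows "d * (1 - d) ^ m \<le> 1 / m"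
proof -
  have "(1 - d) ^ m * (1 + real m * d) \<le> (1 - d) ^ m * (1 + d) ^ m"
    using Bernoulli_inequality[of d m] assms by (intro mult_left_mono) auto
  also have "\<dots> = (1 - d * d) ^ m" by (simp add: power_mult_distrib[symmetric] algebra_simps)
  also have "\<dots> \<le> 1" using assms by (intro power_le_one) (auto simp: mult_le_one)
  finally have "real m * (d * (1 - d) ^ m) \<le> 1"
    using assms by (simp add: algebra_simps) (smt (verit) mult_nonneg_nonneg zero_le_power)
  with assms(3) show ?thesis by (simp add: field_simps)
qed

text \<open>Let \<open>d\<close> be the fraction of the field that is not clearly below \<open>\<mu>\<close>. Then \<open>\<mu>\<close> loses
  only if matched against one of these (probability at most \<open>d\<close>), and the \<open>m\<close> independent
  samples all miss them with probability \<open>(1 - d)^m\<close>; and \<open>d (1 - d)^m \<le> 1/m\<close>.\<close>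

lemma measure_round_eliminates_le:
  assumes "valid_comparator x cmp" "mu \<in> set L" "1 \<le> m"
  shows "measure_pmf.prob (exec cmp (round m L) h)
      {((L', S), h'). mu \<notin> set L' \<and> (\<forall>s\<in>set S. x s < x mu - 1)} \<le> 1 / m"
proof -
  define l where "l = length L"
  obtain p where p: "p < l" "L ! p = mu" using assms(2) by (auto simp: l_def in_set_conv_nth)
  define Q where "Q = {q. x mu - 1 \<le> x (L ! q)}"
  define d where "d = card ({..<l} \<inter> Q) / l"
  have l: "0 < l" using p by simp
  have "p \<in> {..<l} \<inter> Q" using p by (simp add: Q_def)
  then have "1 \<le> card ({..<l} \<inter> Q)" by (auto simp: Suc_le_eq card_gt_0_iff)
  moreover have card_Q: "card ({..<l} \<inter> Q) \<le> l"
    using card_mono[of "{..<l}" "{..<l} \<inter> Q"] by simp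
  ultimately have d: "0 \<le> d" "d \<le> 1" using l by (auto simp: d_def)
  have "{..<l} \<inter> {j. partner l j p \<noteq> p \<and> x mu - 1 \<le> x (L ! partner l j p)}
      = {j. j < l \<and> partner l j p \<noteq> p \<and> partner l j p \<in> Q}"
    by (auto simp: Q_def)
  then have bad: "measure_pmf.prob (uniform l)
      {j. partner l j p \<noteq> p \<and> x mu - 1 \<le> x (L ! partner l j p)} \<le> d"
    using card_shifts_partner_in[OF p(1), of Q] p l
    by (simp add: measure_uniform d_def divide_right_mono Q_def)
  have "{..<l} \<inter> {u. x (L ! u) < x mu - 1} = {..<l} - ({..<l} \<inter> Q)" by (auto simp: Q_def)
  then have "measure_pmf.prob (uniform l) {u. x (L ! u) < x mu - 1} = 1 - d"
    using l card_Q by (simp add: measure_uniform card_Diff_subset d_def of_nat_diff field_simps)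
  then have low: "measure_pmf.prob (replicate_pmf m (uniform l))
      {us. \<forall>u\<in>set us. x (L ! u) < x mu - 1} \<le> (1 - d) ^ m"
    using measure_replicate_pmf_all_le[of m "uniform l" "\<lambda>u. x (L ! u) < x mu - 1"] by simp
  have "measure_pmf.prob (exec cmp (round m L) h)
      {((L', S), h'). mu \<notin> set L' \<and> (\<forall>s\<in>set S. x s < x mu - 1)}
    \<le> measure_pmf.prob (uniform l) {j. partner l j p \<noteq> p \<and> x mu - 1 \<le> x (L ! partner l j p)}
      * measure_pmf.prob (replicate_pmf m (uniform l)) {us. \<forall>u\<in>set us. x (L ! u) < x mu - 1}"
    using measure_round_loses_le[OF assms(1) p(1)[unfolded l_def], of m h]
    unfolding p(2) l_def .
  also have "\<dots> \<le> d * (1 - d) ^ m" using bad low d by (intro mult_mono) auto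
  also have "\<dots> \<le> 1 / m" using mult_one_minus_power_le[OF d assms(3)] .
  finally show ?thesis .
qed

primrec tournament :: "nat \<Rightarrow> nat \<Rightarrow> nat list \<Rightarrow> nat list \<Rightarrow> nat list cprog" where
  "tournament m 0 L F = Return (F @ L)"
| "tournament m (Suc k) L F = cbind (round m L) (\<lambda>(L', S). tournament m k L' (F @ S))"

text \<open>Since \<open>2 l' \<le> l + 2\<close> for consecutive field sizes, \<open>k\<close> rounds leave at most
  \<open>l / 2^k + 2\<close> members; the bound on \<open>length F'\<close> is this estimate multiplied by \<open>2^k\<close>.\<close>

lemma within_budget_tournament:
  assumes "L \<noteq> []" "set L \<subseteq> {..<n}" "length L \<le> B"
  shows "within_budget n (\<lambda>F' B'. B \<le> B' + length L \<and> set F' \<subseteq> set F \<union> set L \<and>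
      2 ^ k * length F' + 2 \<le> 2 ^ k * (length F + k * m) + length L + 2 ^ (k + 1))
    (tournament m k L F) B"
  using assms
proof (induction k arbitrary: L F B)
  case (Suc k)
  have "within_budget n (\<lambda>F' B''. B \<le> B'' + length L \<and> set F' \<subseteq> set F \<union> set L \<and>
        2 ^ Suc k * length F' + 2 \<le> 2 ^ Suc k * (length F + Suc k * m) + length L + 2 ^ (Suc k + 1))
      (tournament m k L' (F @ S)) B'"
    if h: "B' + length L = B + length L'" "L' \<noteq> []" "set L' \<subseteq> set L" "set S \<subseteq> set L"
      "length S = m" "2 * length L' \<le> length L + 2" for L' S B'
  proof -
    have "length L' \<le> B'" using h(1) Suc.prems(3) by linarith
    with h Suc.prems(2) have IH: "within_budget n (\<lambda>F' B''. B' \<le> B'' + length L' \<and>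
        set F' \<subseteq> set (F @ S) \<union> set L' \<and>
        2 ^ k * length F' + 2 \<le> 2 ^ k * (length (F @ S) + k * m) + length L' + 2 ^ (k + 1))
      (tournament m k L' (F @ S)) B'"
      by (intro Suc.IH) auto
    show ?thesis
    proof (rule within_budget_mono[OF IH], elim conjE, intro conjI)
      fix F' B''
      assume a: "B' \<le> B'' + length L'" "set F' \<subseteq> set (F @ S) \<union> set L'"
        "2 ^ k * length F' + 2 \<le> 2 ^ k * (length (F @ S) + k * m) + length L' + 2 ^ (k + 1)"
      show "B \<le> B'' + length L" using a(1) h(1) by linarith
      show "set F' \<subseteq> set F \<union> set L" using a(2) h(3,4) by auto
      have "2 * (2 ^ k * length F' + 2) \<le> 2 * (2 ^ k * (length F + m + k * m) + length L' + 2 ^ (k + 1))"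
        using a(3) h(5) by (simp add: algebra_simps)
      with h(6) show "2 ^ Suc k * length F' + 2
          \<le> 2 ^ Suc k * (length F + Suc k * m) + length L + 2 ^ (Suc k + 1)"
        by (simp add: algebra_simps)
    qed
  qed
  then show ?case unfolding tournament.simps
    by (intro within_budget_cbind within_budget_mono[OF within_budget_round[OF Suc.prems]])
       (auto split: prod.splits)
qed simp

lemma exec_tournament_mono:
  "(F', h') \<in> set_pmf (exec cmp (tournament m k L F) h) \<Longrightarrow> set F \<subseteq> set F'"
proof (induction k arbitrary: L F h)
  case (Suc k)
  then obtain L' S h1 where "(F', h') \<in> set_pmf (exec cmp (tournament m k L' (F @ S)) h1)"
    by (auto simp: exec_cbind split: prod.splits)
  from Suc.IH[OF this] show ?case by auto
qed auto

text \<open>A tournament ends with all its outputs clearly below \<open>\<mu>\<close> only if \<open>\<mu>\<close> is eliminated in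
  some round while all samples of that round are clearly below \<open>\<mu>\<close>.\<close>

lemma measure_tournament_misses_le:
  assumes "valid_comparator x cmp" "mu \<in> set L" "1 \<le> m"
  shows "measure_pmf.prob (exec cmp (tournament m k L F) h) {(F', h'). \<forall>f\<in>set F'. x f < x mu - 1}
    \<le> k / m"
  using assms(2)
proof (induction k arbitrary: L F h)
  case 0
  then show ?case by (auto simp: indicator_def intro!: bexI[of _ mu])
next
  case (Suc k)
  let ?E = "{((L', S), h'). mu \<notin> set L' \<and> (\<forall>s\<in>set S. x s < x mu - 1)}"
  have step: "measure_pmf.prob (exec cmp (tournament m k L' (F @ S)) h1)
      {(F', h'). \<forall>f\<in>set F'. x f < x mu - 1} \<le> k / m"
    if "mu \<in> set L' \<or> (\<exists>s\<in>set S. \<not> x s < x mu - 1)" for L' S h1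
    using that
  proof
    assume "\<exists>s\<in>set S. \<not> x s < x mu - 1"
    then have "measure_pmf.prob (exec cmp (tournament m k L' (F @ S)) h1)
        {(F', h'). \<forall>f\<in>set F'. x f < x mu - 1} = 0"
      using exec_tournament_mono[of _ _ cmp m k L' "F @ S"]
      by (fastforce simp: measure_pmf_zero_iff)
    then show ?thesis by simp
  qed (rule Suc.IH)
  have "measure_pmf.prob (exec cmp (tournament m (Suc k) L F) h) {(F', h'). \<forall>f\<in>set F'. x f < x mu - 1}
    \<le> measure_pmf.prob (exec cmp (round m L) h) ?E + k / m"
    unfolding tournament.simps exec_cbind
    by (rule measure_bind_pmf_le_add) (auto intro!: step split: prod.splits)
  also have "\<dots> \<le> 1 / m + k / m"
    using measure_round_eliminates_le[OF assms(1) Suc.prems assms(3)] by simp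
  finally show ?case by (simp add: add_divide_distrib)
qed

primrec tournaments :: "nat \<Rightarrow> nat \<Rightarrow> nat \<Rightarrow> nat \<Rightarrow> nat list \<Rightarrow> nat list cprog" where
  "tournaments n k m 0 F = Return F"
| "tournaments n k m (Suc r) F = cbind (tournament m k [0..<n] F) (tournaments n k m r)"

lemma within_budget_tournaments:
  assumes "0 < n" "n \<le> 2 ^ k" "r * n \<le> B" "set F \<subseteq> {..<n}"
  shows "within_budget n (\<lambda>F' B'. B \<le> B' + r * n \<and> set F' \<subseteq> {..<n} \<and>
      length F' \<le> length F + r * (k * m + 3)) (tournaments n k m r F) B"
  using assms(3,4)
proof (induction r arbitrary: F B)
  case (Suc r)
  have "[0..<n] \<noteq> []" "set [0..<n] \<subseteq> {..<n}" "length [0..<n] \<le> B"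
    using assms(1) Suc.prems(1) by auto
  from within_budget_tournament[OF this, of F k m]
  show ?case unfolding tournaments.simps
  proof (rule within_budget_cbind[OF within_budget_mono], elim conjE)
    fix F' B' assume h: "B \<le> B' + length [0..<n]" "set F' \<subseteq> set F \<union> set [0..<n]"
      "2 ^ k * length F' + 2 \<le> 2 ^ k * (length F + k * m) + length [0..<n] + 2 ^ (k + 1)"
    have "2 ^ k * length F' \<le> 2 ^ k * (length F + k * m + 3)"
      using h(3) assms(2) by (simp add: algebra_simps)
    then have "length F' \<le> length F + k * m + 3" by simp
    moreover have "r * n \<le> B'" "set F' \<subseteq> {..<n}" using h(1,2) Suc.prems by auto
    ultimately show "within_budget n (\<lambda>F'' B''. B \<le> B'' + Suc r * n \<and> set F'' \<subseteq> {..<n} \<and>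
        length F'' \<le> length F + Suc r * (k * m + 3)) (tournaments n k m r F') B'"
      using h(1) by (auto elim!: within_budget_mono[OF Suc.IH])
  qed
qed simp

lemma exec_tournaments_mono:
  "(F', h') \<in> set_pmf (exec cmp (tournaments n k m r F) h) \<Longrightarrow> set F \<subseteq> set F'"
proof (induction r arbitrary: F h)
  case (Suc r)
  then obtain F1 h1 where "(F1, h1) \<in> set_pmf (exec cmp (tournament m k [0..<n] F) h)"
    and "(F', h') \<in> set_pmf (exec cmp (tournaments n k m r F1) h1)"
    by (auto simp: exec_cbind split: prod.splits)
  with exec_tournament_mono Suc.IH show ?case by blast
qed auto

lemma measure_tournaments_miss_le:
  assumes "valid_comparator x cmp" "mu < n" "1 \<le> m"
  shows "measure_pmf.prob (exec cmp (tournaments n k m r F) h) {(F', h'). \<forall>f\<in>set F'. x f < x mu - 1}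
    \<le> (k / m) ^ r"
proof (induction r arbitrary: F h)
  case (Suc r)
  let ?A = "{(F', h'). \<forall>f\<in>set F'. x f < x mu - 1}"
  have "measure_pmf.prob (exec cmp (tournaments n k m (Suc r) F) h) ?A
    \<le> measure_pmf.prob (exec cmp (tournament m k [0..<n] F) h) ?A * (k / m) ^ r"
    unfolding tournaments.simps exec_cbind
  proof (rule measure_bind_pmf_le_mult, goal_cases)
    case (2 y)
    then show ?case using exec_tournaments_mono[of _ _ cmp n k m r "fst y"]
      by (fastforce simp: measure_pmf_zero_iff)
  qed (use Suc.IH in auto)
  also have "\<dots> \<le> k / m * (k / m) ^ r"
    using measure_tournament_misses_le[OF assms(1) _ assms(3), of mu "[0..<n]" k F h] assms(2)
    by (intro mult_right_mono) auto
  finally show ?case by simp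
qed simp

definition ceil_log2 :: "nat \<Rightarrow> nat" where
  "ceil_log2 n = (LEAST k. n \<le> 2 ^ k)"

definition ceil_cbrt :: "nat \<Rightarrow> nat" where
  "ceil_cbrt n = (LEAST q. n \<le> q ^ 3)"

lemma le_two_power_ceil_log2: "n \<le> 2 ^ ceil_log2 n"
  unfolding ceil_log2_def by (rule LeastI[of _ n]) (simp add: less_imp_le)

lemma ceil_log2_minimal:
  assumes "2 \<le> n"
  shows "1 \<le> ceil_log2 n" "2 ^ (ceil_log2 n - 1) < n"
proof -
  show pos: "1 \<le> ceil_log2 n"
    using le_two_power_ceil_log2[of n] assms by (cases "ceil_log2 n") auto
  then have "\<not> n \<le> 2 ^ (ceil_log2 n - 1)"
    unfolding ceil_log2_def by (intro not_less_Least) (simp add: ceil_log2_def)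
  then show "2 ^ (ceil_log2 n - 1) < n" by simp
qed

lemma le_ceil_cbrt_cube: "n \<le> ceil_cbrt n ^ 3"
proof -
  have "n \<le> n ^ 3" by (cases n) (auto simp: power3_eq_cube)
  then show ?thesis unfolding ceil_cbrt_def by (rule LeastI)
qed

lemma ceil_cbrt_minimal:
  assumes "1 \<le> n"
  shows "1 \<le> ceil_cbrt n" "(ceil_cbrt n - 1) ^ 3 < n"
proof -
  show pos: "1 \<le> ceil_cbrt n"
    using le_ceil_cbrt_cube[of n] assms by (cases "ceil_cbrt n") auto
  then have "\<not> n \<le> (ceil_cbrt n - 1) ^ 3"
    unfolding ceil_cbrt_def by (intro not_less_Least) (simp add: ceil_cbrt_def)
  then show "(ceil_cbrt n - 1) ^ 3 < n" by simp
qed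

lemma ceil_log2_le_ln:
  assumes "2 \<le> n"
  shows "real (ceil_log2 n) \<le> 3 * ln n"
proof -
  have "real (ceil_log2 n - 1) * ln 2 < ln n"
    using ceil_log2_minimal(2)[OF assms] ln_less_cancel_iff[of "2 ^ (ceil_log2 n - 1)" n]
    by (simp add: ln_realpow flip: of_nat_less_iff)
  moreover have "real (ceil_log2 n - 1) * (2/3) \<le> real (ceil_log2 n - 1) * ln 2"
    using ln2_ge_two_thirds by (intro mult_left_mono) auto
  moreover have "ln 2 \<le> ln (real n)" using assms by simp
  with ln2_ge_two_thirds have "2/3 \<le> ln (real n)" by linarith
  moreover have "real (ceil_log2 n) = real (ceil_log2 n - 1) + 1"
    using ceil_log2_minimal(1)[OF assms] by (simp add: of_nat_diff)
  ultimately show ?thesis by linarith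
qed

lemma ceil_cbrt_le_root:
  assumes "1 \<le> n"
  shows "real (ceil_cbrt n) \<le> 2 * real n powr (1/3)"
proof -
  define a where "a = real n powr (1/3)"
  have a3: "a ^ 3 = real n" using assms
    by (simp add: a_def powr_realpow[symmetric] powr_powr)
  have a1: "1 \<le> a" unfolding a_def using assms by (intro ge_one_powr_ge_zero) auto
  have "real (ceil_cbrt n - 1) < a"
  proof (rule ccontr)
    assume "\<not> real (ceil_cbrt n - 1) < a"
    then have "a ^ 3 \<le> real (ceil_cbrt n - 1) ^ 3" using a1 by (intro power_mono) auto
    with a3 ceil_cbrt_minimal(2)[OF assms] show False
      by (metis not_less of_nat_le_iff of_nat_power)
  qed
  then show ?thesis using a1 ceil_cbrt_minimal(1)[OF assms] by (simp add: a_def of_nat_diff)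
qed

lemma ln_ge_4:
  fixes x :: real
  assumes x: "85 \<le> x"
  shows "4 \<le> ln x"
proof -
  have "exp (4::real) = exp 1 ^ 4" by (simp flip: exp_of_nat_mult)
  also have "\<dots> \<le> 3 ^ 4" using exp_le by (intro power_mono) auto
  finally have "exp 4 \<le> x" using x by simp
  then have "ln (exp 4) \<le> ln x" using x by (subst ln_le_cancel_iff) auto
  then show ?thesis by simp
qed

lemma coefficient_ge:
  "57 * real c \<le> (real c + 1) / ((4^4 / (5 * exp 1)^5) * ln 2)"
proof -
  define D where "D = (4^4 / (5 * exp 1)^5) * ln (2::real)"
  have "(10::real) ^ 5 \<le> (5 * exp 1) ^ 5"
    using exp_ge_add_one_self[of 1] by (intro power_mono) auto
  then have "4^4 / (5 * exp 1)^5 \<le> (4^4 / 10^5 :: real)" by (intro divide_left_mono) auto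
  moreover have "0 < ln (2::real)" "ln (2::real) \<le> 1" using ln_2_less_1 by auto
  moreover have "0 < (5 * exp 1 :: real) ^ 5" by simp
  ultimately have D: "0 < D" "D \<le> 4^4 / 10^5"
    unfolding D_def by (auto simp: mult_le_cancel_left1 divide_simps)
  have "real c * D \<le> real c * (4^4 / 10^5)" using D(2) by (intro mult_left_mono) auto
  then have "57 * real c * D \<le> real c + 1" by (simp add: mult.assoc)
  with D(1) show ?thesis unfolding D_def[symmetric] by (simp add: field_simps)
qed

definition samples_per_round :: "nat \<Rightarrow> nat" where
  "samples_per_round n = ceil_log2 n * ceil_cbrt n"

definition final_size :: "nat \<Rightarrow> nat \<Rightarrow> nat" where
  "final_size c n = min n (3 * c * (ceil_log2 n * samples_per_round n + 3))"

definition comparison_budget :: "nat \<Rightarrow> nat \<Rightarrow> nat" where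
  "comparison_budget c n = 3 * c * n + final_size c n * (final_size c n - 1) div 2"

lemma final_size_le:
  assumes "85 \<le> n"
  shows "real (final_size c n)
    \<le> (real c + 1) / ((4^4 / (5 * exp 1)^5) * ln 2) * (real n powr (1/3) * (ln n)^2)"
proof -
  define L where "L = ln (real n)"
  define a where "a = real n powr (1/3)"
  have L: "4 \<le> L" unfolding L_def using ln_ge_4[of n] assms by simp
  have a: "1 \<le> a" unfolding a_def using assms by (intro ge_one_powr_ge_zero) auto
  have K: "real (ceil_log2 n) \<le> 3 * L" unfolding L_def using ceil_log2_le_ln assms by simp
  have q: "real (ceil_cbrt n) \<le> 2 * a" unfolding a_def using ceil_cbrt_le_root assms by simp
  have "real (ceil_log2 n * samples_per_round n)
      = real (ceil_log2 n) * real (ceil_log2 n) * real (ceil_cbrt n)"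
    by (simp add: samples_per_round_def)
  also have "\<dots> \<le> (3 * L) * (3 * L) * (2 * a)"
    using K q L by (intro mult_mono) auto
  finally have "real (ceil_log2 n * samples_per_round n) \<le> 18 * (a * L^2)"
    by (simp add: power2_eq_square algebra_simps)
  moreover have "1 * 16 \<le> a * L^2"
    using a L mult_mono[OF L L] by (intro mult_mono) (auto simp: power2_eq_square)
  ultimately have size: "real (ceil_log2 n * samples_per_round n + 3) \<le> 19 * (a * L^2)" by simp
  have "final_size c n \<le> 3 * c * (ceil_log2 n * samples_per_round n + 3)"
    unfolding final_size_def by simp
  then have "real (final_size c n) \<le> 3 * real c * real (ceil_log2 n * samples_per_round n + 3)"
    by (metis of_nat_mono of_nat_mult of_nat_numeral)
  also have "\<dots> \<le> 3 * real c * (19 * (a * L^2))" using size by (intro mult_left_mono) auto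
  also have "\<dots> = 57 * real c * (a * L^2)" by simp
  also have "\<dots> \<le> (real c + 1) / ((4^4 / (5 * exp 1)^5) * ln 2) * (a * L^2)"
    using coefficient_ge[of c] a by (intro mult_right_mono) auto
  finally show ?thesis unfolding a_def L_def .
qed

lemma comparison_budget_le:
  assumes "1 \<le> c"
  shows "real (comparison_budget c n) \<le> (real (15 * (c + 2) + 1) - 1) * real n
    + 1/2 * ((real c + 1) / ((4^4 / (5 * exp 1)^5) * ln 2))^2 * real n powr (2/3) * (ln n)^4"
proof -
  define N where "N = final_size c n"
  define X where "X = (real c + 1) / ((4^4 / (5 * exp 1)^5) * ln (2::real))"
  have "2 * (N * (N - 1) div 2) \<le> N * N"
    by (metis diff_le_self mult_le_mono2 div_times_less_eq_dividend dual_order.trans mult.commute)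
  then have "real (2 * (N * (N - 1) div 2)) \<le> real (N * N)" by (simp only: of_nat_le_iff)
  then have "real (N * (N - 1) div 2) \<le> real N * real N / 2" by simp
  then have budget: "real (comparison_budget c n) \<le> 3 * real c * real n + real N * real N / 2"
    by (simp add: comparison_budget_def N_def)
  have X: "0 \<le> X" using coefficient_ge[of c] unfolding X_def by linarith
  show ?thesis
  proof (cases "n \<le> 84")
    case True
    have "N \<le> n" by (simp add: N_def final_size_def)
    then have "real N * real N \<le> 84 * real n" using True by (intro mult_mono) auto
    moreover have "(3 * real c + 42) * real n \<le> (real (15 * (c + 2) + 1) - 1) * real n"
      using assms by (intro mult_right_mono) auto
    then have "3 * real c * real n + 42 * real n \<le> (real (15 * (c + 2) + 1) - 1) * real n"
      by (simp add: algebra_simps)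
    moreover have "0 \<le> 1/2 * X^2 * real n powr (2/3) * (ln n)^4" by simp
    ultimately show ?thesis using budget unfolding X_def by linarith
  next
    case False
    have "real N \<le> X * (real n powr (1/3) * (ln n)^2)"
      using final_size_le[of n c] False unfolding N_def X_def by simp
    then have "real N * real N \<le> (X * (real n powr (1/3) * (ln n)^2)) * (X * (real n powr (1/3) * (ln n)^2))"
      by (intro mult_mono) auto
    also have "\<dots> = X^2 * (real n powr (1/3) * real n powr (1/3)) * (ln n)^4"
      by (simp add: power2_eq_square power4_eq_xxxx algebra_simps)
    also have "real n powr (1/3) * real n powr (1/3) = real n powr (2/3)"
      by (simp add: powr_add[symmetric])
    finally have "real N * real N / 2 \<le> 1/2 * X^2 * real n powr (2/3) * (ln n)^4" by simp
    moreover have "3 * real c * real n \<le> (real (15 * (c + 2) + 1) - 1) * real n"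
      by (intro mult_right_mono) auto
    ultimately show ?thesis using budget unfolding X_def by linarith
  qed
qed

text \<open>With \<open>K = \<lceil>log\<^sub>2 n\<rceil>\<close> rounds and \<open>K \<lceil>n^(1/3)\<rceil>\<close> samples per round, one
  tournament misses with probability at most \<open>1 / \<lceil>n^(1/3)\<rceil>\<close>, so \<open>3 c\<close> independent
  tournaments all miss with probability at most \<open>n^-c\<close>.\<close>

definition find_3max :: "nat \<Rightarrow> nat \<Rightarrow> nat cprog" where
  "find_3max c n = cbind (tournaments n (ceil_log2 n) (samples_per_round n) (3 * c) [])
     (\<lambda>F. round_robin (remdups F))"

lemma within_budget_tournaments_find_3max:
  assumes "1 \<le> n"
  shows "within_budget n (\<lambda>F B'. comparison_budget c n \<le> B' + 3 * c * n \<and> set F \<subseteq> {..<n} \<and>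
      length F \<le> 3 * c * (ceil_log2 n * samples_per_round n + 3))
    (tournaments n (ceil_log2 n) (samples_per_round n) (3 * c) []) (comparison_budget c n)"
  using within_budget_tournaments[of n "ceil_log2 n" "3 * c" "comparison_budget c n" "[]"]
    assms le_two_power_ceil_log2 by (simp add: comparison_budget_def)

lemma within_budget_find_3max:
  assumes "1 \<le> n"
  shows "within_budget n (\<lambda>k B'. k < n) (find_3max c n) (comparison_budget c n)"
  unfolding find_3max_def
proof (rule within_budget_cbind, rule within_budget_mono[OF within_budget_tournaments_find_3max[OF assms]],
    elim conjE)
  fix F B'
  assume h: "comparison_budget c n \<le> B' + 3 * c * n" "set F \<subseteq> {..<n}"
    "length F \<le> 3 * c * (ceil_log2 n * samples_per_round n + 3)"
  let ?l = "length (remdups F)"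
  have "?l = card (set F)" by (simp add: length_remdups_card_conv)
  also have "\<dots> \<le> n" using card_mono[OF _ h(2)] by simp
  finally have "?l \<le> n" .
  moreover have "?l \<le> 3 * c * (ceil_log2 n * samples_per_round n + 3)"
    using order_trans[OF length_remdups_leq h(3)] .
  ultimately have "?l \<le> final_size c n" by (simp add: final_size_def)
  then have "?l * (?l - 1) div 2 \<le> final_size c n * (final_size c n - 1) div 2"
    by (intro div_le_mono mult_le_mono diff_le_mono)
  with h(1) have "?l * (?l - 1) div 2 \<le> B'" by (simp add: comparison_budget_def)
  with h(2) assms show "within_budget n (\<lambda>k B'. k < n) (round_robin (remdups F)) B'"
    by (intro within_budget_round_robin) auto
qed

lemma exec_round_robin_3max:
  assumes "valid_comparator x cmp" "(w, h') \<in> set_pmf (exec cmp (round_robin F) h)"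
    and "set F \<subseteq> {..<n}" "f \<in> set F" "\<forall>j<n. x j \<le> x f + 1"
  shows "is_kmax 3 n x w"
proof -
  have "F \<noteq> []" using assms(4) by auto
  then have "w \<in> set F" "x f \<le> x w + 2"
    using exec_round_robin[OF assms(1,2)] assms(4) by auto
  with assms(3,5) show ?thesis unfolding is_kmax_def k_greater_def by force
qed

lemma measure_find_3max_fails_le:
  assumes "valid_comparator x cmp" "1 \<le> n" "\<forall>j<n. x j \<le> x mu"
  shows "measure_pmf.prob (exec cmp (find_3max c n) []) (- {(k, h). is_kmax 3 n x k})
    \<le> measure_pmf.prob (exec cmp (tournaments n (ceil_log2 n) (samples_per_round n) (3 * c) []) [])
        {(F, h). \<forall>f\<in>set F. x f < x mu - 1}"
proof -
  have "measure_pmf.prob (exec cmp (round_robin (remdups F)) h1) (- {(k, h). is_kmax 3 n x k}) = 0"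
    if F: "(F, h1) \<in> set_pmf
        (exec cmp (tournaments n (ceil_log2 n) (samples_per_round n) (3 * c) []) [])"
      and hit: "\<not> (\<forall>f\<in>set F. x f < x mu - 1)" for F h1
  proof -
    obtain f where f: "f \<in> set F" "x mu - 1 \<le> x f" using hit by auto
    have "set F \<subseteq> {..<n}"
      using within_budget_exec[OF within_budget_tournaments_find_3max[OF assms(2)] F] by auto
    moreover have "\<forall>j<n. x j \<le> x f + 1" using f(2) assms(3) by force
    ultimately show ?thesis
      using exec_round_robin_3max[OF assms(1), of _ _ "remdups F" h1 n f] f(1)
      by (fastforce simp: measure_pmf_zero_iff)
  qed
  then have "measure_pmf.prob (exec cmp (find_3max c n) []) (- {(k, h). is_kmax 3 n x k})
    \<le> measure_pmf.prob (exec cmp (tournaments n (ceil_log2 n) (samples_per_round n) (3 * c) []) [])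
        {(F, h). \<forall>f\<in>set F. x f < x mu - 1} + 0"
    unfolding find_3max_def exec_cbind
    by (intro measure_bind_pmf_le_add) (auto split: prod.splits)
  then show ?thesis by simp
qed

lemma find_3max_correct:
  assumes "valid_comparator x cmp" "2 \<le> n"
  shows "1 - 1 / n ^ c \<le> measure_pmf.prob (exec cmp (find_3max c n) []) {(k, h). is_kmax 3 n x k}"
proof -
  define K where "K = ceil_log2 n"
  define q where "q = ceil_cbrt n"
  have K: "1 \<le> K" using ceil_log2_minimal(1)[OF assms(2)] by (simp add: K_def)
  have q: "1 \<le> q" using ceil_cbrt_minimal(1)[of n] assms(2) by (simp add: q_def)
  have fin: "finite (x ` {..<n})" by simp
  have "0 \<in> {..<n}" using assms(2) by simp
  then obtain mu where "mu < n" "x mu = Max (x ` {..<n})"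
    using Max_in[OF fin] by fastforce
  with fin have mu: "mu < n" "\<forall>j<n. x j \<le> x mu" by auto
  have "measure_pmf.prob (exec cmp (find_3max c n) []) (- {(k, h). is_kmax 3 n x k})
    \<le> measure_pmf.prob (exec cmp (tournaments n K (K * q) (3 * c) []) [])
        {(F, h). \<forall>f\<in>set F. x f < x mu - 1}"
    using measure_find_3max_fails_le[OF assms(1) _ mu(2), of c] assms(2)
    by (simp add: K_def q_def samples_per_round_def)
  also have "\<dots> \<le> (K / (K * q)) ^ (3 * c)"
    using measure_tournaments_miss_le[OF assms(1) mu(1), of "K * q" K "3 * c" "[]" "[]"] K q
    by simp
  also have "\<dots> \<le> 1 / n ^ c"
  proof -
    have "real n ^ c \<le> (real q ^ 3) ^ c"
      using le_ceil_cbrt_cube[of n] by (intro power_mono) (auto simp: q_def simp flip: of_nat_power)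
    then have "real n ^ c \<le> real q ^ (3 * c)" by (simp add: power_mult)
    with K assms(2) show ?thesis by (simp add: power_one_over divide_simps)
  qed
  finally show ?thesis
    using measure_pmf.prob_compl[of "{(k, h). is_kmax 3 n x k}" "exec cmp (find_3max c n) []"]
    by (simp add: Compl_eq_Diff_UNIV)
qed

theorem mainTheorem8:
  fixes c :: nat
  assumes "c \<ge> 1"
  shows "\<exists>A :: nat \<Rightarrow> dtree pmf.
    \<forall>n::nat. n \<ge> 1 \<longrightarrow>
      (\<forall>T \<in> set_pmf (A n). wf_tree n T \<and>
         real (height T) \<le>
           (real (15 * (c + 2) + 1) - 1) * real n
           + 1/2 * ((real c + 1) / ((4^4 / (5 * exp 1)^5) * ln 2))^2
               * real n powr (2/3) * (ln (real n))^4)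
    \<and> (\<forall>(x :: nat \<Rightarrow> real) (cmp :: comparator). valid_comparator x cmp \<longrightarrow>
         measure_pmf.prob (A n) {T. is_kmax 3 n x (fst (run cmp [] T))}
           \<ge> 1 - 1 / real n ^ c)"
proof (intro exI[of _ "\<lambda>n. dtree_pmf (find_3max c n)"] allI impI conjI ballI)
  fix n :: nat and T assume n: "1 \<le> n" and T: "T \<in> set_pmf (dtree_pmf (find_3max c n))"
  from within_budget_dtree_pmf[OF within_budget_find_3max[OF n] T]
  show "wf_tree n T" and "real (height T) \<le> (real (15 * (c + 2) + 1) - 1) * real n
      + 1/2 * ((real c + 1) / ((4^4 / (5 * exp 1)^5) * ln 2))^2 * real n powr (2/3) * (ln (real n))^4"
    using comparison_budget_le[OF assms, of n] by auto
next
  fix n :: nat and x cmp assume n: "1 \<le> n" and valid: "valid_comparator x cmp"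
  have "measure_pmf.prob (dtree_pmf (find_3max c n)) {T. is_kmax 3 n x (fst (run cmp [] T))}
      = measure_pmf.prob (exec cmp (find_3max c n) []) {(k, h). is_kmax 3 n x k}"
    by (simp flip: map_run_dtree_pmf add: vimage_def case_prod_beta)
  with find_3max_correct[OF valid, of n c] n
  show "1 - 1 / real n ^ c \<le> measure_pmf.prob (dtree_pmf (find_3max c n)) {T. is_kmax 3 n x (fst (run cmp [] T))}"
    by (cases "n = 1") auto
qed

end
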